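(* Let $D$ be an AV-domain with quotient field $K$ and let $L$ be a subfield of $K$. Then $D\cap L$ is an AV-domain. Moreover, if $M$ denotes the quotient field of $D\cap L$, then $\overline{D}\cap M$ is a valuation domain with quotient field $M$, and the integral closures of $D\cap L$ and of $D\cap M$ (in $M$) both equal $\overline{D}\cap M$.
   Context: An integral domain $D$ is an AV-domain if for all nonzero $a,b\in D$ there is a natural number $n$ with $a^n\mid b^n$ or $b^n\mid a^n$ in $D$. $\overline{D}$ denotes the integral closure of $D$ in $K$. *)

theory Defs
  imports "HOL-Computational_Algebra.Polynomial"
begin

text \<open>All rings considered are subrings of an ambient field of type 'k.\<close>

definition subring :: "'k::field set \<Rightarrow> bool" where
  "subring S \<longleftrightarrow> 0 \<in> S \<and> 1 \<in> S \<and>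
     (\<forall>x\<in>S. \<forall>y\<in>S. x + y \<in> S \<and> x - y \<in> S \<and> x * y \<in> S)"

definition subfield :: "'k::field set \<Rightarrow> bool" where
  "subfield S \<longleftrightarrow> subring S \<and> (\<forall>x\<in>S. x \<noteq> 0 \<longrightarrow> inverse x \<in> S)"

definition quot_field :: "'k::field set \<Rightarrow> 'k set" where
  "quot_field S = {a / b | a b. a \<in> S \<and> b \<in> S \<and> b \<noteq> 0}"

definition dvd_in :: "'k::field set \<Rightarrow> 'k \<Rightarrow> 'k \<Rightarrow> bool" where
  "dvd_in S a b \<longleftrightarrow> (\<exists>c\<in>S. b = a * c)"

definition AV_domain :: "'k::field set \<Rightarrow> bool" where
  "AV_domain D \<longleftrightarrow> subring D \<and>
     (\<forall>a\<in>D. \<forall>b\<in>D. a \<noteq> 0 \<longrightarrow> b \<noteq> 0 \<longrightarrow>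
        (\<exists>n::nat. n \<ge> 1 \<and> (dvd_in D (a ^ n) (b ^ n) \<or> dvd_in D (b ^ n) (a ^ n))))"

definition valuation_domain_with_qf :: "'k::field set \<Rightarrow> 'k set \<Rightarrow> bool" where
  "valuation_domain_with_qf V M \<longleftrightarrow> subring V \<and> quot_field V = M \<and>
     (\<forall>x\<in>M. x \<noteq> 0 \<longrightarrow> x \<in> V \<or> inverse x \<in> V)"

definition integral_over :: "'k::field set \<Rightarrow> 'k \<Rightarrow> bool" where
  "integral_over S x \<longleftrightarrow>
     (\<exists>p :: 'k poly. lead_coeff p = 1 \<and> (\<forall>i. coeff p i \<in> S) \<and> poly p x = 0)"

definition integral_closure :: "'k::field set \<Rightarrow> 'k set \<Rightarrow> 'k set" where
  "integral_closure S M = {x \<in> M. integral_over S x}"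

end

theory Submission
  imports Defs "Jordan_Normal_Form.Char_Poly"
begin

text \<open>
  In an AV-domain \<open>D\<close> with quotient field \<open>K\<close> every nonzero \<open>x \<in> K\<close> has \<open>x\<^sup>n \<in> D\<close>
  or \<open>x\<^sup>-\<^sup>n \<in> D\<close> for some \<open>n \<ge> 1\<close>. If \<open>x\<close> is integral over \<open>D\<close> and \<open>x\<^sup>-\<^sup>n \<in> D\<close>, then
  \<open>x\<^sup>n\<close> is integral over \<open>D\<close> and the inverse of an element of \<open>D\<close>, hence lies in \<open>D\<close>. So the
  elements of \<open>K\<close> integral over \<open>D\<close> are exactly those with a power in \<open>D\<close>. Intersecting
  with the quotient field \<open>M\<close> of \<open>D \<inter> L\<close> therefore gives a valuation ring of \<open>M\<close>, and an
  element of \<open>M\<close> with a power in \<open>D \<inter> M \<subseteq> D \<inter> L\<close> is integral over both \<open>D \<inter> M\<close> and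
  \<open>D \<inter> L\<close>. That \<open>D \<inter> L\<close> is an AV-domain is immediate: \<open>b\<^sup>n / a\<^sup>n\<close> stays in \<open>L\<close>.
  Integral elements form a ring by the determinant trick, using characteristic polynomials.
\<close>

lemma subringD:
  assumes "subring S"
  shows subring_zero: "0 \<in> S" and subring_one: "1 \<in> S"
    and subring_add: "x \<in> S \<Longrightarrow> y \<in> S \<Longrightarrow> x + y \<in> S"
    and subring_diff: "x \<in> S \<Longrightarrow> y \<in> S \<Longrightarrow> x - y \<in> S"
    and subring_mult: "x \<in> S \<Longrightarrow> y \<in> S \<Longrightarrow> x * y \<in> S"
  using assms unfolding subring_def by auto

lemma subring_uminus: "subring S \<Longrightarrow> x \<in> S \<Longrightarrow> - x \<in> S"
  by (metis diff_0 subring_zero subring_diff)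

lemma subring_sum: "subring S \<Longrightarrow> (\<And>a. a \<in> A \<Longrightarrow> f a \<in> S) \<Longrightarrow> sum f A \<in> S"
  by (induction A rule: infinite_finite_induct) (auto intro: subringD)

lemma subring_power: "subring S \<Longrightarrow> x \<in> S \<Longrightarrow> x ^ n \<in> S"
  by (induction n) (auto intro: subringD)

lemma subring_Int: "subring A \<Longrightarrow> subring B \<Longrightarrow> subring (A \<inter> B)"
  unfolding subring_def by auto

lemma subring_UNIV: "subring UNIV"
  unfolding subring_def by simp

lemma subfield_divide: "subfield L \<Longrightarrow> a \<in> L \<Longrightarrow> b \<in> L \<Longrightarrow> a / b \<in> L"
  unfolding subfield_def by (cases "b = 0") (auto simp: divide_inverse intro: subringD)

section \<open>Polynomials with coefficients in a subring\<close>

definition poly_over :: "'k::field set \<Rightarrow> 'k poly set" where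
  "poly_over S = {p. \<forall>i. coeff p i \<in> S}"

lemma poly_over_0: "subring S \<Longrightarrow> 0 \<in> poly_over S"
  unfolding poly_over_def by (auto intro: subringD)

lemma poly_over_pCons: "c \<in> S \<Longrightarrow> p \<in> poly_over S \<Longrightarrow> pCons c p \<in> poly_over S"
  unfolding poly_over_def by (auto simp: coeff_pCons split: nat.splits)

lemma poly_over_1: "subring S \<Longrightarrow> 1 \<in> poly_over S"
  by (simp add: one_pCons poly_over_pCons poly_over_0 subring_one)

lemma poly_over_add: "subring S \<Longrightarrow> p \<in> poly_over S \<Longrightarrow> q \<in> poly_over S \<Longrightarrow> p + q \<in> poly_over S"
  unfolding poly_over_def by (auto intro: subringD)

lemma poly_over_uminus: "subring S \<Longrightarrow> p \<in> poly_over S \<Longrightarrow> - p \<in> poly_over S"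
  unfolding poly_over_def by (auto intro: subring_uminus)

lemma poly_over_mult: "subring S \<Longrightarrow> p \<in> poly_over S \<Longrightarrow> q \<in> poly_over S \<Longrightarrow> p * q \<in> poly_over S"
  unfolding poly_over_def by (auto simp: coeff_mult intro!: subring_sum subringD)

lemma poly_over_sum: "subring S \<Longrightarrow> (\<And>a. a \<in> A \<Longrightarrow> f a \<in> poly_over S) \<Longrightarrow> sum f A \<in> poly_over S"
  by (induction A rule: infinite_finite_induct) (auto intro: poly_over_add poly_over_0)

lemma poly_over_prod: "subring S \<Longrightarrow> (\<And>a. a \<in> A \<Longrightarrow> f a \<in> poly_over S) \<Longrightarrow> prod f A \<in> poly_over S"
  by (induction A rule: infinite_finite_induct) (auto intro: poly_over_mult poly_over_1)

lemma poly_over_signof: "subring S \<Longrightarrow> signof p \<in> poly_over S"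
  by (cases p rule: sign_cases) (auto intro: poly_over_1 poly_over_uminus)

lemma char_poly_poly_over:
  assumes S: "subring S" and A: "A \<in> carrier_mat n n"
    and entries: "\<And>i j. i < n \<Longrightarrow> j < n \<Longrightarrow> A $$ (i, j) \<in> S"
  shows "char_poly A \<in> poly_over S"
proof -
  have "char_poly_matrix A $$ (i, j) \<in> poly_over S" if "i < n" "j < n" for i j
    using that A entries[OF that]
    by (auto simp: char_poly_matrix_def intro!: poly_over_add poly_over_mult poly_over_pCons
        poly_over_0 poly_over_1 S subring_zero subring_one subring_uminus)
  then show ?thesis
    unfolding char_poly_def det_def'[OF char_poly_matrix_closed[OF A]]
    by (intro poly_over_sum poly_over_mult poly_over_signof poly_over_prod S)
      (auto dest: permutes_in_image)
qed

section \<open>Integral elements\<close>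

lemma integral_over_mono: "S \<subseteq> T \<Longrightarrow> integral_over S x \<Longrightarrow> integral_over T x"
  unfolding integral_over_def by blast

lemma integral_over_if_eigenvalue:
  assumes S: "subring S" and A: "A \<in> carrier_mat n n"
    and entries: "\<And>i j. i < n \<Longrightarrow> j < n \<Longrightarrow> A $$ (i, j) \<in> S"
    and "eigenvalue A s"
  shows "integral_over S s"
proof -
  have "poly (char_poly A) s = 0"
    using \<open>eigenvalue A s\<close> eigenvalue_root_char_poly[OF A] by simp
  moreover have "lead_coeff (char_poly A) = 1"
    using degree_monic_char_poly[OF A] by simp
  ultimately show ?thesis
    using char_poly_poly_over[OF S A entries] unfolding integral_over_def poly_over_def by blast
qed

definition span_over :: "'k::field set \<Rightarrow> 'k set \<Rightarrow> 'k set" where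
  "span_over S G = {(\<Sum>g\<in>G. c g * g) | c. \<forall>g\<in>G. c g \<in> S}"

lemma span_overI: "(\<And>g. g \<in> G \<Longrightarrow> c g \<in> S) \<Longrightarrow> (\<Sum>g\<in>G. c g * g) \<in> span_over S G"
  unfolding span_over_def by blast

lemma span_overE:
  assumes "x \<in> span_over S G"
  obtains c where "\<And>g. g \<in> G \<Longrightarrow> c g \<in> S" "x = (\<Sum>g\<in>G. c g * g)"
  using assms unfolding span_over_def by blast

lemma span_over_0: "subring S \<Longrightarrow> 0 \<in> span_over S G"
  using span_overI[of G "\<lambda>_. 0" S] by (simp add: subring_zero)

lemma span_over_add:
  assumes S: "subring S" and "x \<in> span_over S G" "y \<in> span_over S G"
  shows "x + y \<in> span_over S G"
proof -
  obtain c d where c: "\<And>g. g \<in> G \<Longrightarrow> c g \<in> S" "x = (\<Sum>g\<in>G. c g * g)"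
    and d: "\<And>g. g \<in> G \<Longrightarrow> d g \<in> S" "y = (\<Sum>g\<in>G. d g * g)"
    using assms(2,3) by (elim span_overE) blast
  have "x + y = (\<Sum>g\<in>G. (c g + d g) * g)"
    using c d by (simp add: sum.distrib distrib_right)
  then show ?thesis using c d S by (simp add: span_overI subring_add)
qed

lemma span_over_scale:
  assumes S: "subring S" and "x \<in> span_over S G" "a \<in> S"
  shows "a * x \<in> span_over S G"
proof -
  obtain c where c: "\<And>g. g \<in> G \<Longrightarrow> c g \<in> S" "x = (\<Sum>g\<in>G. c g * g)"
    using assms(2) by (elim span_overE) blast
  have "a * x = (\<Sum>g\<in>G. (a * c g) * g)"
    using c by (simp add: sum_distrib_left mult.assoc)
  then show ?thesis using c assms by (simp add: span_overI subring_mult)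
qed

lemma span_over_sum:
  "subring S \<Longrightarrow> (\<And>a. a \<in> A \<Longrightarrow> f a \<in> span_over S G) \<Longrightarrow> sum f A \<in> span_over S G"
  by (induction A rule: infinite_finite_induct) (auto intro: span_over_add span_over_0)

lemma span_over_generator:
  assumes S: "subring S" and G: "finite G" and "h \<in> G"
  shows "h \<in> span_over S G"
proof -
  have "(\<Sum>g\<in>G. (if g = h then 1 else 0) * g) = (\<Sum>g\<in>G. if g = h then h else 0)"
    by (rule sum.cong) auto
  also have "\<dots> = h" using G \<open>h \<in> G\<close> by simp
  finally have "(\<Sum>g\<in>G. (if g = h then 1 else 0) * g) = h" .
  moreover have "(\<Sum>g\<in>G. (if g = h then 1 else 0) * g) \<in> span_over S G"
    using S by (intro span_overI) (simp add: subring_zero subring_one)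
  ultimately show ?thesis by simp
qed

lemma span_over_mult_closed:
  assumes S: "subring S" and stable: "\<And>g. g \<in> G \<Longrightarrow> s * g \<in> span_over S G"
    and "x \<in> span_over S G"
  shows "s * x \<in> span_over S G"
proof -
  obtain c where c: "\<And>g. g \<in> G \<Longrightarrow> c g \<in> S" "x = (\<Sum>g\<in>G. c g * g)"
    using assms(3) by (elim span_overE) blast
  have "s * x = (\<Sum>g\<in>G. c g * (s * g))"
    using c by (simp add: sum_distrib_left algebra_simps)
  also have "\<dots> \<in> span_over S G"
    using c stable span_over_scale[OF S] by (intro span_over_sum[OF S]) blast
  finally show ?thesis .
qed

lemma eigenvalue_if_linear_relations:
  fixes h :: "nat \<Rightarrow> 'a::field"
  assumes "k < n" "h k \<noteq> 0"
    and relations: "\<And>i. i < n \<Longrightarrow> s * h i = (\<Sum>j = 0..<n. a i j * h j)"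
  shows "eigenvalue (mat n n (\<lambda>(i, j). a i j)) s"
proof -
  define v where "v = vec n h"
  have "v \<noteq> 0\<^sub>v n"
  proof
    assume "v = 0\<^sub>v n"
    then have "h k = 0" using \<open>k < n\<close> by (metis index_vec index_zero_vec(1) v_def)
    with \<open>h k \<noteq> 0\<close> show False ..
  qed
  moreover have "mat n n (\<lambda>(i, j). a i j) *\<^sub>v v = s \<cdot>\<^sub>v v"
    by (rule eq_vecI) (simp_all add: v_def scalar_prod_def relations)
  ultimately show ?thesis
    unfolding eigenvalue_def eigenvector_def by (intro exI[of _ v]) (simp add: v_def)
qed

text \<open>
  The determinant trick: enumerating \<open>G\<close> as \<open>h 0, \<dots>, h (n - 1)\<close>, multiplication by \<open>s\<close>
  has a matrix over \<open>S\<close> with the nonzero eigenvector \<open>(h i)\<^sub>i\<close>.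
\<close>

lemma integral_over_if_span_stable:
  assumes S: "subring S" and G: "finite G" and "g\<^sub>0 \<in> G" "g\<^sub>0 \<noteq> 0"
    and stable: "\<And>g. g \<in> G \<Longrightarrow> s * g \<in> span_over S G"
  shows "integral_over S s"
proof -
  define n where "n = card G"
  obtain h where h: "bij_betw h {0..<n} G"
    using ex_bij_betw_nat_finite[OF G] unfolding n_def by blast
  have "\<exists>c. (\<forall>g\<in>G. c g \<in> S) \<and> s * h i = (\<Sum>g\<in>G. c g * g)" if "i < n" for i
  proof -
    have "h i \<in> G" using h that by (auto simp: bij_betw_def)
    then have "s * h i \<in> span_over S G" by (rule stable)
    then show ?thesis by (elim span_overE) blast
  qed
  then obtain c where c: "\<And>i g. i < n \<Longrightarrow> g \<in> G \<Longrightarrow> c i g \<in> S"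
    and c_sum: "\<And>i. i < n \<Longrightarrow> s * h i = (\<Sum>g\<in>G. c i g * g)"
    by metis
  obtain k where "k < n" "h k = g\<^sub>0"
    using h \<open>g\<^sub>0 \<in> G\<close> by (metis atLeastLessThan_iff bij_betw_iff_bijections)
  moreover have "s * h i = (\<Sum>j = 0..<n. c i (h j) * h j)" if "i < n" for i
    using c_sum[OF that] sum.reindex_bij_betw[OF h, of "\<lambda>g. c i g * g"] by simp
  ultimately have "eigenvalue (mat n n (\<lambda>(i, j). c i (h j))) s"
    using \<open>g\<^sub>0 \<noteq> 0\<close> eigenvalue_if_linear_relations[of k n h s "\<lambda>i j. c i (h j)"] by simp
  moreover have "mat n n (\<lambda>(i, j). c i (h j)) $$ (i, j) \<in> S" if "i < n" "j < n" for i j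
    using that c h by (auto simp: bij_betw_def)
  ultimately show ?thesis
    using integral_over_if_eigenvalue[OF S, of "mat n n (\<lambda>(i, j). c i (h j))" n] by simp
qed

lemma integral_over_if_power_mem:
  assumes S: "subring S" and "n \<ge> 1" and "y ^ n \<in> S"
  shows "integral_over S y"
proof -
  define p where "p = monom 1 n - [:y ^ n:]"
  have "degree p = n"
    unfolding p_def using \<open>n \<ge> 1\<close>
    by (subst diff_conv_add_uminus, subst degree_add_eq_left) (auto simp: degree_monom_eq)
  then have "lead_coeff p = 1"
    unfolding p_def using \<open>n \<ge> 1\<close> by (simp add: coeff_pCons split: nat.splits)
  moreover have "\<forall>i. coeff p i \<in> S"
    unfolding p_def using assms
    by (auto simp: coeff_monom coeff_pCons split: nat.splits intro: subringD subring_uminus)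
  moreover have "poly p y = 0" unfolding p_def by (simp add: poly_monom)
  ultimately show ?thesis unfolding integral_over_def by blast
qed

lemma integral_over_if_mem: "subring S \<Longrightarrow> y \<in> S \<Longrightarrow> integral_over S y"
  using integral_over_if_power_mem[of S 1 y] by simp

lemma monic_root_degree_pos:
  fixes p :: "'k::field poly"
  assumes "lead_coeff p = 1" "poly p x = 0"
  shows "degree p \<ge> 1"
proof (rule ccontr)
  assume "\<not> degree p \<ge> 1"
  then have "degree p = 0" by simp
  then have "p = [:1:]" using degree_0_id[of p] assms(1) by simp
  then show False using assms(2) by simp
qed

lemma integral_over_powers_in_span:
  assumes S: "subring S" and "integral_over S x"
  obtains m where "m \<ge> 1" "\<And>k. x ^ k \<in> span_over S ((\<lambda>i. x ^ i) ` {..<m})"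
proof -
  obtain p where p: "lead_coeff p = 1" "\<forall>i. coeff p i \<in> S" "poly p x = 0"
    using assms unfolding integral_over_def by blast
  define m where "m = degree p"
  define G where "G = (\<lambda>i. x ^ i) ` {..<m}"
  have m: "m \<ge> 1" unfolding m_def using monic_root_degree_pos[OF p(1,3)] .
  have low: "x ^ i \<in> span_over S G" if "i < m" for i
    using that by (intro span_over_generator[OF S]) (auto simp: G_def)
  have "0 = (\<Sum>i<m. coeff p i * x ^ i) + x ^ m"
    using p(1,3) unfolding m_def poly_altdef by (simp add: lessThan_Suc_atMost[symmetric])
  then have "x ^ m = (\<Sum>i<m. (- coeff p i) * x ^ i)"
    by (simp add: sum_negf eq_neg_iff_add_eq_0 add.commute)
  also have "\<dots> \<in> span_over S G"
    using low p(2) S by (intro span_over_sum[OF S] span_over_scale[OF S]) (auto intro: subring_uminus)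
  finally have top: "x ^ m \<in> span_over S G" .
  have stable: "x * g \<in> span_over S G" if "g \<in> G" for g
  proof -
    obtain i where "i < m" "g = x ^ i" using \<open>g \<in> G\<close> unfolding G_def by auto
    then have "x * g = x ^ Suc i" by simp
    moreover have "Suc i < m \<or> Suc i = m" using \<open>i < m\<close> by linarith
    ultimately show ?thesis using low[of "Suc i"] top by auto
  qed
  have "x ^ k \<in> span_over S G" for k
    by (induction k) (use low[of 0] m span_over_mult_closed[OF S stable] in auto)
  then show ?thesis using that m unfolding G_def by blast
qed

lemma span_over_mult:
  assumes S: "subring S" and "finite A" "finite B"
    and "u \<in> span_over S A" "v \<in> span_over S B"
  shows "u * v \<in> span_over S ((\<lambda>(a, b). a * b) ` (A \<times> B))"
proof -
  define G where "G = (\<lambda>(a, b). a * b) ` (A \<times> B)"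
  have G: "finite G" unfolding G_def using assms(2,3) by simp
  obtain c d where c: "\<And>a. a \<in> A \<Longrightarrow> c a \<in> S" "u = (\<Sum>a\<in>A. c a * a)"
    and d: "\<And>b. b \<in> B \<Longrightarrow> d b \<in> S" "v = (\<Sum>b\<in>B. d b * b)"
    using assms(4,5) by (elim span_overE) blast
  have "u * v = (\<Sum>a\<in>A. \<Sum>b\<in>B. (c a * d b) * (a * b))"
    unfolding c(2) d(2) sum_product by (simp add: algebra_simps)
  also have "\<dots> \<in> span_over S G"
  proof (rule span_over_sum[OF S], rule span_over_sum[OF S])
    fix a b assume "a \<in> A" "b \<in> B"
    then have "a * b \<in> G" "c a * d b \<in> S"
      using c d by (auto simp: G_def intro: subring_mult[OF S])
    then have "a * b \<in> span_over S G" "c a * d b \<in> S"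
      by (simp_all add: span_over_generator[OF S G])
    then show "(c a * d b) * (a * b) \<in> span_over S G" by (rule span_over_scale[OF S])
  qed
  finally show ?thesis unfolding G_def .
qed

text \<open>
  The span of the monomials \<open>x\<^sup>i y\<^sup>j\<close>, with \<open>i, j\<close> below the degrees of integral equations
  of \<open>x\<close> and \<open>y\<close>, contains all \<open>x\<^sup>a y\<^sup>b\<close> and hence is stable under \<open>x + y\<close> and \<open>x y\<close>.
\<close>

lemma integral_over_add_mult:
  assumes S: "subring S" and x: "integral_over S x" and y: "integral_over S y"
  shows "integral_over S (x + y)" and "integral_over S (x * y)"
proof -
  obtain mx where mx: "mx \<ge> 1" "\<And>k. x ^ k \<in> span_over S ((\<lambda>i. x ^ i) ` {..<mx})"
    using integral_over_powers_in_span[OF S x] by blast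
  obtain my where my: "my \<ge> 1" "\<And>k. y ^ k \<in> span_over S ((\<lambda>j. y ^ j) ` {..<my})"
    using integral_over_powers_in_span[OF S y] by blast
  define G where "G = (\<lambda>(a, b). a * b) ` ((\<lambda>i. x ^ i) ` {..<mx} \<times> (\<lambda>j. y ^ j) ` {..<my})"
  have G: "finite G" unfolding G_def by simp
  have one: "1 \<in> G"
    unfolding G_def using mx(1) my(1) by (auto intro!: image_eqI[of _ _ "(1, 1)"] image_eqI[of 1 _ 0])
  have monomial: "x ^ a * y ^ b \<in> span_over S G" for a b
    unfolding G_def by (intro span_over_mult[OF S] mx(2) my(2)) simp_all
  have G_elem: "\<exists>i j. g = x ^ i * y ^ j" if "g \<in> G" for g
    using that unfolding G_def by auto
  show "integral_over S (x + y)"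
  proof (rule integral_over_if_span_stable[OF S G one])
    fix g assume "g \<in> G"
    then obtain i j where "g = x ^ i * y ^ j" using G_elem by blast
    then have "(x + y) * g = x ^ Suc i * y ^ j + x ^ i * y ^ Suc j" by (simp add: algebra_simps)
    then show "(x + y) * g \<in> span_over S G" using span_over_add[OF S monomial monomial] by (simp only:)
  qed simp
  show "integral_over S (x * y)"
  proof (rule integral_over_if_span_stable[OF S G one])
    fix g assume "g \<in> G"
    then obtain i j where "g = x ^ i * y ^ j" using G_elem by blast
    then have "(x * y) * g = x ^ Suc i * y ^ Suc j" by (simp add: algebra_simps)
    then show "(x * y) * g \<in> span_over S G" using monomial by (simp only:)
  qed simp
qed

lemma integral_over_uminus:
  assumes S: "subring S" and "integral_over S x"
  shows "integral_over S (- x)"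
  using integral_over_add_mult(2)[OF S integral_over_if_mem[OF S subring_uminus[OF S subring_one[OF S]]] assms(2)]
  by simp

lemma subring_integral_closure:
  assumes S: "subring S" and M: "subring M"
  shows "subring (integral_closure S M)"
proof -
  have "subring {x. integral_over S x}"
    unfolding subring_def
  proof (intro conjI ballI; simp only: mem_Collect_eq)
    show "integral_over S 0" "integral_over S 1"
      using S by (simp_all add: integral_over_if_mem subring_zero subring_one)
    fix x y assume x: "integral_over S x" and y: "integral_over S y"
    show "integral_over S (x + y)" "integral_over S (x * y)"
      by (fact integral_over_add_mult[OF S x y])+
    show "integral_over S (x - y)"
      using integral_over_add_mult(1)[OF S x integral_over_uminus[OF S y]] by simp
  qed
  then show ?thesis
    using subring_Int[OF M] by (simp add: integral_closure_def Collect_conj_eq)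
qed

text \<open>Multiply an integral equation of \<open>e\<^sup>-\<^sup>1\<close> of degree \<open>k + 1\<close> by \<open>e\<^sup>k\<close>.\<close>

lemma inverse_mem_if_integral_over:
  fixes e :: "'k::field"
  assumes S: "subring S" and "e \<in> S" "e \<noteq> 0" and "integral_over S (inverse e)"
  shows "inverse e \<in> S"
proof -
  obtain p where p: "lead_coeff p = 1" "\<forall>i. coeff p i \<in> S" "poly p (inverse e) = 0"
    using assms(4) unfolding integral_over_def by blast
  obtain k where k: "degree p = Suc k"
    using monic_root_degree_pos[OF p(1,3)] by (cases "degree p") auto
  have pw: "e ^ k * inverse e ^ i = e ^ (k - i)" if "i \<le> k" for i
  proof -
    have "e ^ k = e ^ (k - i) * e ^ i" using that by (simp flip: power_add)
    then show ?thesis using \<open>e \<noteq> 0\<close> by (simp add: power_inverse field_simps)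
  qed
  have pw_top: "e ^ k * inverse e ^ Suc k = inverse e"
    using \<open>e \<noteq> 0\<close> by (simp add: power_inverse field_simps)
  have "0 = e ^ k * poly p (inverse e)" using p(3) by simp
  also have "\<dots> = e ^ k * ((\<Sum>i\<le>k. coeff p i * inverse e ^ i) + inverse e ^ Suc k)"
    using p(1) k by (simp add: poly_altdef)
  also have "\<dots> = (\<Sum>i\<le>k. coeff p i * (e ^ k * inverse e ^ i)) + e ^ k * inverse e ^ Suc k"
    by (simp add: sum_distrib_left distrib_left mult.left_commute)
  also have "\<dots> = (\<Sum>i\<le>k. coeff p i * e ^ (k - i)) + inverse e"
    using pw pw_top by simp
  finally have "inverse e = - (\<Sum>i\<le>k. coeff p i * e ^ (k - i))"
    by (simp add: eq_neg_iff_add_eq_0 add.commute)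
  also have "\<dots> \<in> S"
    using S p(2) \<open>e \<in> S\<close> by (intro subring_uminus subring_sum subring_mult subring_power) auto
  finally show ?thesis .
qed

section \<open>Quotient fields\<close>

lemma quot_fieldE:
  assumes "x \<in> quot_field S"
  obtains a b where "x = a / b" "a \<in> S" "b \<in> S" "b \<noteq> 0"
  using assms unfolding quot_field_def by blast

lemma subset_quot_field:
  assumes "subring S"
  shows "S \<subseteq> quot_field S"
proof
  fix x assume "x \<in> S"
  then have "x = x / 1" "x \<in> S" "1 \<in> S" "(1::'a) \<noteq> 0" using subring_one[OF assms] by simp_all
  then show "x \<in> quot_field S" unfolding quot_field_def by blast
qed

lemma quot_field_mono: "S \<subseteq> T \<Longrightarrow> quot_field S \<subseteq> quot_field T"
  unfolding quot_field_def by blast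

lemma subfield_quot_field:
  assumes S: "subring S"
  shows "subfield (quot_field S)"
  unfolding subfield_def subring_def
proof (intro conjI ballI impI)
  show "0 \<in> quot_field S" "1 \<in> quot_field S"
    using subset_quot_field[OF S] S by (auto intro: subringD)
  fix x y assume "x \<in> quot_field S" "y \<in> quot_field S"
  then obtain a b c d where ab: "x = a / b" "a \<in> S" "b \<in> S" "b \<noteq> 0"
    and cd: "y = c / d" "c \<in> S" "d \<in> S" "d \<noteq> 0" by (elim quot_fieldE) blast
  have "b * d \<in> S" "b * d \<noteq> 0" using ab cd S by (auto intro: subringD)
  moreover have "x + y = (a * d + c * b) / (b * d)" "x - y = (a * d - c * b) / (b * d)"
    "x * y = (a * c) / (b * d)"
    using ab cd by (simp_all add: field_simps)
  moreover have "a * d + c * b \<in> S" "a * d - c * b \<in> S" "a * c \<in> S"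
    using ab cd S by (auto intro: subringD)
  ultimately show "x + y \<in> quot_field S" "x - y \<in> quot_field S" "x * y \<in> quot_field S"
    unfolding quot_field_def by blast+
next
  fix x assume "x \<in> quot_field S" "x \<noteq> 0"
  obtain a b where "x = a / b" "a \<in> S" "b \<in> S" "b \<noteq> 0"
    using \<open>x \<in> quot_field S\<close> by (rule quot_fieldE)
  with \<open>x \<noteq> 0\<close> have "inverse x = b / a" "a \<noteq> 0" by simp_all
  with \<open>a \<in> S\<close> \<open>b \<in> S\<close> show "inverse x \<in> quot_field S"
    unfolding quot_field_def by blast
qed

lemma quot_field_subset_subfield:
  assumes "subfield L" "S \<subseteq> L"
  shows "quot_field S \<subseteq> L"
  using assms by (auto elim!: quot_fieldE intro: subfield_divide)

lemma quot_field_eq_if_between: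
  assumes "subring S" "S \<subseteq> T" "T \<subseteq> quot_field S"
  shows "quot_field T = quot_field S"
  using quot_field_mono[OF assms(2)]
    quot_field_subset_subfield[OF subfield_quot_field[OF assms(1)] assms(3)]
  by blast

section \<open>AV-domains\<close>

lemma AV_domain_subring: "AV_domain D \<Longrightarrow> subring D"
  unfolding AV_domain_def by blast

lemma AV_domain_power_mem:
  assumes AV: "AV_domain D" and Q: "quot_field D = UNIV" and "x \<noteq> 0"
  obtains n where "n \<ge> 1" "x ^ n \<in> D \<or> inverse x ^ n \<in> D"
proof -
  obtain a b where ab: "x = a / b" "a \<in> D" "b \<in> D" "b \<noteq> 0"
    using Q quot_fieldE by blast
  then have "a \<noteq> 0" using \<open>x \<noteq> 0\<close> by simp
  then obtain n where n: "n \<ge> 1" "dvd_in D (a ^ n) (b ^ n) \<or> dvd_in D (b ^ n) (a ^ n)"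
    using AV ab unfolding AV_domain_def by blast
  have "x ^ n = a ^ n / b ^ n" "inverse x ^ n = b ^ n / a ^ n"
    using ab by (simp_all add: power_divide)
  then have "x ^ n \<in> D \<or> inverse x ^ n \<in> D"
    using n(2) \<open>a \<noteq> 0\<close> \<open>b \<noteq> 0\<close> unfolding dvd_in_def by auto
  then show ?thesis using n(1) that by blast
qed

lemma AV_domain_integral_power_mem:
  assumes AV: "AV_domain D" and Q: "quot_field D = UNIV" and x: "integral_over D x"
  obtains n where "n \<ge> 1" "x ^ n \<in> D"
proof (cases "x = 0")
  case True
  then show ?thesis using that[of 1] AV_domain_subring[OF AV] by (simp add: subring_zero)
next
  case False
  have D: "subring D" using AV_domain_subring[OF AV] .
  obtain n where n: "n \<ge> 1" "x ^ n \<in> D \<or> inverse x ^ n \<in> D"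
    using AV_domain_power_mem[OF AV Q False] .
  have "x ^ n \<in> integral_closure D UNIV"
    using x subring_power[OF subring_integral_closure[OF D subring_UNIV]]
    by (simp add: integral_closure_def)
  then have "inverse x ^ n \<in> D \<Longrightarrow> x ^ n \<in> D"
    using inverse_mem_if_integral_over[OF D, of "inverse x ^ n"] False
    by (simp add: integral_closure_def power_inverse)
  then show ?thesis using n that by blast
qed

lemma AV_domain_Int_subfield:
  assumes AV: "AV_domain D" and L: "subfield L"
  shows "AV_domain (D \<inter> L)"
proof -
  have L_ring: "subring L" using L unfolding subfield_def by blast
  have dvd_in_Int: "dvd_in (D \<inter> L) (u ^ n) (w ^ n)"
    if dvd: "dvd_in D (u ^ n) (w ^ n)" and "u \<in> L" "w \<in> L" "u \<noteq> 0" for u w n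
  proof -
    obtain c where c: "c \<in> D" "w ^ n = u ^ n * c" using dvd unfolding dvd_in_def by blast
    then have "c = w ^ n / u ^ n" using \<open>u \<noteq> 0\<close> by simp
    then have "c \<in> L" using \<open>u \<in> L\<close> \<open>w \<in> L\<close> L L_ring by (simp add: subfield_divide subring_power)
    then show ?thesis using c unfolding dvd_in_def by blast
  qed
  show ?thesis
    unfolding AV_domain_def
  proof (intro conjI ballI impI)
    show "subring (D \<inter> L)" using subring_Int[OF AV_domain_subring[OF AV] L_ring] .
    fix a b assume "a \<in> D \<inter> L" "b \<in> D \<inter> L" "a \<noteq> 0" "b \<noteq> 0"
    moreover obtain n where "n \<ge> 1" "dvd_in D (a ^ n) (b ^ n) \<or> dvd_in D (b ^ n) (a ^ n)"
      using AV calculation unfolding AV_domain_def by blast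
    ultimately show "\<exists>n\<ge>1. dvd_in (D \<inter> L) (a ^ n) (b ^ n) \<or> dvd_in (D \<inter> L) (b ^ n) (a ^ n)"
      using dvd_in_Int by blast
  qed
qed

lemma AV_domain_valuation_integral_closure:
  assumes AV: "AV_domain D" and Q: "quot_field D = UNIV" and S: "subring S" "S \<subseteq> D"
  shows "valuation_domain_with_qf (integral_closure D UNIV \<inter> quot_field S) (quot_field S)"
  unfolding valuation_domain_with_qf_def
proof (intro conjI ballI impI)
  have D: "subring D" using AV_domain_subring[OF AV] .
  have F: "subfield (quot_field S)" using subfield_quot_field[OF S(1)] .
  then show "subring (integral_closure D UNIV \<inter> quot_field S)"
    by (intro subring_Int subring_integral_closure D subring_UNIV) (simp add: subfield_def)
  show "quot_field (integral_closure D UNIV \<inter> quot_field S) = quot_field S"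
    using S subset_quot_field[OF S(1)]
    by (intro quot_field_eq_if_between) (auto simp: integral_closure_def intro: integral_over_if_mem[OF D])
  fix x assume x: "x \<in> quot_field S" "x \<noteq> 0"
  then have "inverse x \<in> quot_field S" using F unfolding subfield_def by blast
  moreover obtain n where "n \<ge> 1" "x ^ n \<in> D \<or> inverse x ^ n \<in> D"
    using AV_domain_power_mem[OF AV Q x(2)] .
  then have "integral_over D x \<or> integral_over D (inverse x)"
    using integral_over_if_power_mem[OF D] by blast
  ultimately show "x \<in> integral_closure D UNIV \<inter> quot_field S \<or>
      inverse x \<in> integral_closure D UNIV \<inter> quot_field S"
    using x(1) by (auto simp: integral_closure_def)
qed

lemma AV_domain_integral_closure_eq:
  assumes AV: "AV_domain D" and Q: "quot_field D = UNIV"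
    and T: "subring T" "T \<subseteq> D" and M: "subring M" "D \<inter> M \<subseteq> T"
  shows "integral_closure T M = integral_closure D UNIV \<inter> M"
proof
  show "integral_closure T M \<subseteq> integral_closure D UNIV \<inter> M"
    using integral_over_mono[OF T(2)] by (auto simp: integral_closure_def)
  show "integral_closure D UNIV \<inter> M \<subseteq> integral_closure T M"
  proof
    fix x assume "x \<in> integral_closure D UNIV \<inter> M"
    then have "integral_over D x" "x \<in> M" by (auto simp: integral_closure_def)
    moreover obtain n where "n \<ge> 1" "x ^ n \<in> D"
      using AV_domain_integral_power_mem[OF AV Q \<open>integral_over D x\<close>] .
    ultimately have "x ^ n \<in> T" using subring_power[OF M(1)] M(2) by blast
    then show "x \<in> integral_closure T M"
      using \<open>n \<ge> 1\<close> \<open>x \<in> M\<close> integral_over_if_power_mem[OF T(1)] by (auto simp: integral_closure_def)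
  qed
qed

theorem theorem2:
  fixes D L :: "'k::field set"
  assumes "AV_domain D"
    and "quot_field D = UNIV"
    and "subfield L"
  shows "AV_domain (D \<inter> L) \<and>
    valuation_domain_with_qf (integral_closure D UNIV \<inter> quot_field (D \<inter> L)) (quot_field (D \<inter> L)) \<and>
    integral_closure (D \<inter> L) (quot_field (D \<inter> L)) = integral_closure D UNIV \<inter> quot_field (D \<inter> L) \<and>
    integral_closure (D \<inter> quot_field (D \<inter> L)) (quot_field (D \<inter> L)) = integral_closure D UNIV \<inter> quot_field (D \<inter> L)"
proof -
  note AV = assms(1) and Q = assms(2) and L = assms(3)
  have D: "subring D" using AV_domain_subring[OF AV] .
  have AV_DL: "AV_domain (D \<inter> L)" using AV_domain_Int_subfield[OF AV L] .
  then have DL: "subring (D \<inter> L)" by (rule AV_domain_subring)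
  define M where "M = quot_field (D \<inter> L)"
  have M: "subring M" using subfield_quot_field[OF DL] unfolding M_def subfield_def by blast
  have "M \<subseteq> L" unfolding M_def by (rule quot_field_subset_subfield[OF L]) blast
  have "valuation_domain_with_qf (integral_closure D UNIV \<inter> M) M"
    unfolding M_def using AV_domain_valuation_integral_closure[OF AV Q DL] by blast
  moreover have "integral_closure (D \<inter> L) M = integral_closure D UNIV \<inter> M"
    using AV_domain_integral_closure_eq[OF AV Q DL _ M] \<open>M \<subseteq> L\<close> by blast
  moreover have "integral_closure (D \<inter> M) M = integral_closure D UNIV \<inter> M"
    using AV_domain_integral_closure_eq[OF AV Q subring_Int[OF D M] _ M] by blast
  ultimately show ?thesis using AV_DL unfolding M_def by blast
qed

end
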